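(* For every $\tau\in[0,\infty)$, the Lane–Emden equation $x''(t)+\frac{2}{t}x'(t)+x(t)=0$, $t\in(\tau,\infty)$, is not Ulam stable on $(\tau,\infty)$.
   Context: Ulam stability (scalar case $n=1$, real or complex valued functions): the equation $\alpha(t)x''+\beta(t)x'+\gamma(t)x=f(t)$ is Ulam stable on $I$ if there exists $L>0$ such that for every $\varepsilon>0$ and every $\xi\in C^2(I)$ with $\sup_{t\in I}|\alpha\xi''+\beta\xi'+\gamma\xi-f|\le\varepsilon$, there is a solution $x$ with $\sup_{t\in I}|\xi(t)-x(t)|\le L\varepsilon$. *)

theory Defs
  imports "HOL-Analysis.Analysis"
begin

text \<open>x is in C^2(I) with first derivative x' and second derivative x'' on I
  (I open interval, so derivatives are ordinary two-sided ones).\<close>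
definition C2_on :: "real set \<Rightarrow> (real \<Rightarrow> 'a::real_normed_vector) \<Rightarrow> (real \<Rightarrow> 'a) \<Rightarrow> (real \<Rightarrow> 'a) \<Rightarrow> bool" where
  "C2_on I x x' x'' \<longleftrightarrow>
     (\<forall>t\<in>I. (x has_vector_derivative x' t) (at t) \<and> (x' has_vector_derivative x'' t) (at t))
     \<and> continuous_on I x''"

definition ulam_stable :: "real set \<Rightarrow> (real \<Rightarrow> 'a::real_normed_field) \<Rightarrow> (real \<Rightarrow> 'a) \<Rightarrow> (real \<Rightarrow> 'a) \<Rightarrow> (real \<Rightarrow> 'a) \<Rightarrow> bool" where
  "ulam_stable I \<alpha> \<beta> \<gamma> f \<longleftrightarrow>
     (\<exists>L>0. \<forall>\<epsilon>>0. \<forall>\<xi> \<xi>' \<xi>''.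
        C2_on I \<xi> \<xi>' \<xi>'' \<and>
        (\<forall>t\<in>I. norm (\<alpha> t * \<xi>'' t + \<beta> t * \<xi>' t + \<gamma> t * \<xi> t - f t) \<le> \<epsilon>)
        \<longrightarrow> (\<exists>x x' x''. C2_on I x x' x'' \<and>
               (\<forall>t\<in>I. \<alpha> t * x'' t + \<beta> t * x' t + \<gamma> t * x t = f t) \<and>
               (\<forall>t\<in>I. norm (\<xi> t - x t) \<le> L * \<epsilon>)))"

end

theory Submission
  imports Defs
begin

text \<open>Every real solution of \<open>x'' + (2/t) x' + x = 0\<close> satisfies \<open>(t x)'' + t x = 0\<close>, so the
  energy \<open>(t x)'\<^sup>2 + (t x)\<^sup>2\<close> is constant and \<open>x = O(1/t)\<close>. The function
  \<open>\<xi>(t) = (cos t + t sin t)/4\<close> has residual \<open>cos t\<close>, hence solves the equation up to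
  \<open>\<epsilon> = 1\<close>, but \<open>\<xi>(2n\<pi> + \<pi>/2)\<close> grows linearly; so \<open>\<xi>\<close> stays at bounded distance from no
  solution. In the complex case, the real part of a complex solution is a real solution.\<close>

lemma C2_on_of_real:
  "C2_on I f f' f'' \<Longrightarrow>
    C2_on I (\<lambda>t. of_real (f t) :: 'a::real_normed_algebra_1) (\<lambda>t. of_real (f' t)) (\<lambda>t. of_real (f'' t))"
  unfolding C2_on_def has_real_derivative_iff_has_vector_derivative[symmetric]
  by (auto intro!: has_vector_derivative_of_real continuous_on_of_real)

lemma C2_on_Re:
  "C2_on I x x' x'' \<Longrightarrow> C2_on I (\<lambda>t. Re (x t)) (\<lambda>t. Re (x' t)) (\<lambda>t. Re (x'' t))"
  unfolding C2_on_def has_real_derivative_iff_has_vector_derivative[symmetric]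
  by (auto intro!: has_field_derivative_Re continuous_on_Re)

lemma ulam_stable_unit_residual:
  assumes "ulam_stable I \<alpha> \<beta> \<gamma> f"
  obtains L where "\<And>\<xi> \<xi>' \<xi>''. C2_on I \<xi> \<xi>' \<xi>'' \<Longrightarrow>
      (\<forall>t\<in>I. norm (\<alpha> t * \<xi>'' t + \<beta> t * \<xi>' t + \<gamma> t * \<xi> t - f t) \<le> 1) \<Longrightarrow>
      \<exists>x x' x''. C2_on I x x' x'' \<and> (\<forall>t\<in>I. \<alpha> t * x'' t + \<beta> t * x' t + \<gamma> t * x t = f t) \<and>
        (\<forall>t\<in>I. norm (\<xi> t - x t) \<le> L)"
  using assms unfolding ulam_stable_def by (metis mult.right_neutral zero_less_one)

lemma lane_emden_energy_constant:
  fixes x x' x'' :: "real \<Rightarrow> real"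
  assumes "convex S" and "S \<subseteq> {0<..}"
    and deriv: "\<And>t. t \<in> S \<Longrightarrow> (x has_real_derivative x' t) (at t) \<and> (x' has_real_derivative x'' t) (at t)"
    and ode: "\<And>t. t \<in> S \<Longrightarrow> x'' t + 2 / t * x' t + x t = 0"
  shows "\<exists>c. \<forall>t\<in>S. (x t + t * x' t)\<^sup>2 + (t * x t)\<^sup>2 = c"
proof (rule has_field_derivative_zero_constant[OF \<open>convex S\<close>])
  fix t assume "t \<in> S"
  then have "t > 0" using \<open>S \<subseteq> {0<..}\<close> by auto
  have "((\<lambda>t. (x t + t * x' t)\<^sup>2 + (t * x t)\<^sup>2) has_real_derivative
      2 * (x t + t * x' t) * (2 * x' t + t * x'' t) + 2 * (t * x t) * (x t + t * x' t)) (at t)"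
    using deriv[OF \<open>t \<in> S\<close>]
    by (auto intro!: derivative_eq_intros simp: algebra_simps power2_eq_square)
  moreover have "2 * (x t + t * x' t) * (2 * x' t + t * x'' t) + 2 * (t * x t) * (x t + t * x' t)
      = 2 * t * (x t + t * x' t) * (x'' t + 2 / t * x' t + x t)"
    using \<open>t > 0\<close> by (simp add: field_simps)
  ultimately show "((\<lambda>t. (x t + t * x' t)\<^sup>2 + (t * x t)\<^sup>2) has_real_derivative 0) (at t within S)"
    using ode[OF \<open>t \<in> S\<close>] by (auto intro: has_field_derivative_at_within)
qed

lemma lane_emden_solution_bounded:
  fixes x x' x'' :: "real \<Rightarrow> real"
  assumes "\<tau> \<ge> 0" and "C2_on {\<tau><..} x x' x''"
    and "\<And>t. t > \<tau> \<Longrightarrow> x'' t + 2 / t * x' t + x t = 0"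
  shows "\<exists>K. \<forall>t>\<tau>. \<bar>t * x t\<bar> \<le> K"
proof -
  have "\<exists>c. \<forall>t\<in>{\<tau><..}. (x t + t * x' t)\<^sup>2 + (t * x t)\<^sup>2 = c"
    using assms unfolding C2_on_def has_real_derivative_iff_has_vector_derivative[symmetric]
    by (intro lane_emden_energy_constant) auto
  then obtain c where c: "\<And>t. t > \<tau> \<Longrightarrow> (x t + t * x' t)\<^sup>2 + (t * x t)\<^sup>2 = c"
    by auto
  have "\<bar>t * x t\<bar> \<le> sqrt c" if "t > \<tau>" for t
    using c[OF that] by (intro real_le_rsqrt) (auto simp: add_increasing)
  then show ?thesis by blast
qed

definition lane_emden_quasi_solution :: "real \<Rightarrow> real" where
  "lane_emden_quasi_solution t = (cos t + t * sin t) / 4"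

lemma lane_emden_quasi_solution_C2:
  "C2_on I lane_emden_quasi_solution (\<lambda>t. t * cos t / 4) (\<lambda>t. (cos t - t * sin t) / 4)"
  unfolding C2_on_def lane_emden_quasi_solution_def
    has_real_derivative_iff_has_vector_derivative[symmetric]
  by (auto intro!: derivative_eq_intros continuous_on_divide continuous_on_diff continuous_on_mult
      continuous_on_id continuous_on_sin continuous_on_cos continuous_on_const simp: field_simps)

lemma lane_emden_quasi_solution_residual:
  "t \<noteq> 0 \<Longrightarrow>
    (cos t - t * sin t) / 4 + 2 / t * (t * cos t / 4) + lane_emden_quasi_solution t = cos t"
  unfolding lane_emden_quasi_solution_def by (simp add: field_simps)

lemma lane_emden_quasi_solution_unbounded: "\<exists>t>a. lane_emden_quasi_solution t = t / 4"
proof -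
  obtain n :: nat where n: "real n > a"
    using reals_Archimedean2 by blast
  define t where "t = 2 * real n * pi + pi / 2"
  have "real n * 1 \<le> real n * (2 * pi)"
    using pi_gt3 by (intro mult_left_mono) auto
  then have "real n \<le> 2 * real n * pi"
    by (simp add: mult_ac)
  then have "t > a"
    using n pi_gt_zero unfolding t_def by linarith
  moreover have "sin t = 1" "cos t = 0"
    unfolding t_def by (simp_all add: sin_add cos_add)
  ultimately show ?thesis
    unfolding lane_emden_quasi_solution_def by auto
qed

lemma lane_emden_quasi_solution_far_from_solutions:
  fixes x x' x'' :: "real \<Rightarrow> real"
  assumes "\<tau> \<ge> 0" and "C2_on {\<tau><..} x x' x''"
    and "\<And>t. t > \<tau> \<Longrightarrow> x'' t + 2 / t * x' t + x t = 0"
  shows "\<exists>t>\<tau>. \<bar>lane_emden_quasi_solution t - x t\<bar> > M"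
proof (rule ccontr)
  assume "\<not> ?thesis"
  then have near: "\<bar>lane_emden_quasi_solution t - x t\<bar> \<le> M" if "t > \<tau>" for t
    using that by (meson not_less)
  obtain K where K: "\<And>t. t > \<tau> \<Longrightarrow> \<bar>t * x t\<bar> \<le> K"
    using lane_emden_solution_bounded[OF assms] by blast
  obtain t where t: "t > max (max \<tau> 1) (4 * (M + K))" "lane_emden_quasi_solution t = t / 4"
    using lane_emden_quasi_solution_unbounded by blast
  have "x t \<le> \<bar>t * x t\<bar>"
    using t(1) abs_ge_self[of "x t"] mult_right_mono[of 1 t "\<bar>x t\<bar>"] by (simp add: abs_mult)
  also have "\<dots> \<le> K"
    using K t(1) by simp
  finally have "x t \<le> K" .
  moreover have "t / 4 - x t \<le> M"
    using near[of t] t by (simp add: abs_le_iff)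
  moreover have "4 * M + 4 * K < t"
    using t(1) by simp
  ultimately show False
    by linarith
qed

lemma lane_emden_real_not_ulam_stable:
  assumes "\<tau> \<ge> 0"
  shows "\<not> ulam_stable {\<tau><..} (\<lambda>_. 1::real) (\<lambda>t. 2 / t) (\<lambda>_. 1) (\<lambda>_. 0)"
proof
  assume "ulam_stable {\<tau><..} (\<lambda>_. 1::real) (\<lambda>t. 2 / t) (\<lambda>_. 1) (\<lambda>_. 0)"
  then obtain L where L: "\<And>\<xi> \<xi>' \<xi>''. C2_on {\<tau><..} \<xi> \<xi>' \<xi>'' \<Longrightarrow>
      (\<forall>t\<in>{\<tau><..}. \<bar>\<xi>'' t + 2 / t * \<xi>' t + \<xi> t\<bar> \<le> 1) \<Longrightarrow>
      \<exists>x x' x''. C2_on {\<tau><..} x x' x'' \<and>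
        (\<forall>t\<in>{\<tau><..}. x'' t + 2 / t * x' t + x t = 0) \<and>
        (\<forall>t\<in>{\<tau><..}. \<bar>\<xi> t - x t\<bar> \<le> L)"
    by (rule ulam_stable_unit_residual) (simp only: mult_1_left diff_zero real_norm_def, blast)
  have "\<bar>(cos t - t * sin t) / 4 + 2 / t * (t * cos t / 4) + lane_emden_quasi_solution t\<bar> \<le> 1"
    if "t > \<tau>" for t
    using that assms lane_emden_quasi_solution_residual[of t] by simp
  then obtain x x' x'' where x: "C2_on {\<tau><..} x x' x''"
      "\<forall>t\<in>{\<tau><..}. x'' t + 2 / t * x' t + x t = 0"
      "\<forall>t\<in>{\<tau><..}. \<bar>lane_emden_quasi_solution t - x t\<bar> \<le> L"
    using L[OF lane_emden_quasi_solution_C2] by auto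
  then show False
    using lane_emden_quasi_solution_far_from_solutions[OF assms x(1), of L] by (meson greaterThan_iff not_le)
qed

lemma lane_emden_complex_not_ulam_stable:
  assumes "\<tau> \<ge> 0"
  shows "\<not> ulam_stable {\<tau><..} (\<lambda>_. 1::complex) (\<lambda>t. complex_of_real (2 / t)) (\<lambda>_. 1) (\<lambda>_. 0)"
proof
  assume "ulam_stable {\<tau><..} (\<lambda>_. 1::complex) (\<lambda>t. complex_of_real (2 / t)) (\<lambda>_. 1) (\<lambda>_. 0)"
  then obtain L where L: "\<And>\<xi> \<xi>' \<xi>''. C2_on {\<tau><..} \<xi> \<xi>' \<xi>'' \<Longrightarrow>
      (\<forall>t\<in>{\<tau><..}. cmod (\<xi>'' t + complex_of_real (2 / t) * \<xi>' t + \<xi> t) \<le> 1) \<Longrightarrow>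
      \<exists>x x' x''. C2_on {\<tau><..} x x' x'' \<and>
        (\<forall>t\<in>{\<tau><..}. x'' t + complex_of_real (2 / t) * x' t + x t = 0) \<and>
        (\<forall>t\<in>{\<tau><..}. cmod (\<xi> t - x t) \<le> L)"
    by (rule ulam_stable_unit_residual) (simp only: mult_1_left diff_zero, blast)
  have "cmod (of_real ((cos t - t * sin t) / 4) + of_real (2 / t) * of_real (t * cos t / 4)
      + of_real (lane_emden_quasi_solution t)) \<le> 1" if "t > \<tau>" for t
  proof -
    have "t \<noteq> 0" using that assms by simp
    show ?thesis
      by (simp only: of_real_mult[symmetric] of_real_add[symmetric]
          lane_emden_quasi_solution_residual[OF \<open>t \<noteq> 0\<close>] norm_of_real abs_cos_le_one)
  qed
  then obtain x x' x'' where x: "C2_on {\<tau><..} x x' x''"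
      "\<forall>t\<in>{\<tau><..}. x'' t + complex_of_real (2 / t) * x' t + x t = 0"
      "\<forall>t\<in>{\<tau><..}. cmod (of_real (lane_emden_quasi_solution t) - x t) \<le> L"
    using L[OF C2_on_of_real[OF lane_emden_quasi_solution_C2]] by auto
  have "Re (x'' t) + 2 / t * Re (x' t) + Re (x t) = 0" if "t > \<tau>" for t
    using arg_cong[OF x(2)[rule_format], of t Re] that by simp
  moreover have "\<bar>lane_emden_quasi_solution t - Re (x t)\<bar> \<le> L" if "t > \<tau>" for t
  proof -
    have "\<bar>lane_emden_quasi_solution t - Re (x t)\<bar> = \<bar>Re (of_real (lane_emden_quasi_solution t) - x t)\<bar>"
      by simp
    also have "\<dots> \<le> cmod (of_real (lane_emden_quasi_solution t) - x t)"
      by (rule abs_Re_le_cmod)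
    also have "\<dots> \<le> L"
      using x(3) that by simp
    finally show ?thesis .
  qed
  ultimately show False
    using lane_emden_quasi_solution_far_from_solutions[OF assms C2_on_Re[OF x(1)], of L]
    by (meson not_le)
qed

theorem mainTheorem10:
  fixes \<tau> :: real
  assumes "\<tau> \<ge> 0"
  shows "\<not> ulam_stable {\<tau><..} (\<lambda>_. 1::real) (\<lambda>t. 2 / t) (\<lambda>_. 1) (\<lambda>_. 0)
       \<and> \<not> ulam_stable {\<tau><..} (\<lambda>_. 1::complex) (\<lambda>t. complex_of_real (2 / t)) (\<lambda>_. 1) (\<lambda>_. 0)"
  using lane_emden_real_not_ulam_stable[OF assms] lane_emden_complex_not_ulam_stable[OF assms]
  by blast

end
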